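(* Let $k\in\{0,1,-1\}$ and consider the system for real functions $\hat H=(H_1,H_2,H_3)^T$, $\hat h=(h_1,h_2,h_3)^T$: $$\frac{d\hat H}{dt}=\hat H\times\hat\Omega+\hat h\times\hat a,\qquad \frac{d\hat h}{dt}=\hat h\times\hat\Omega+k\,(\hat H\times\hat a),$$ with $\hat a=(1,0,0)^T$ and $\hat\Omega=(H_1/2,H_2/2,H_3)^T$. Along a solution put $x=\tfrac12(H_1+iH_2)$, $y=h_1+ih_2$, $x_3=H_3$, $y_3=h_3$, and $q=x^2-(y-k)$. Let $H=x\bar x+\tfrac12x_3^2+\operatorname{Re}y$, $K_2=|y|^2+y_3^2+k(4|x|^2+x_3^2)$, $K_3=2\operatorname{Re}(x\bar y)+x_3y_3$, $K_4^2=|q|^2$ (all constant along the solution), let $\tilde K_2=K_2-k(2H-2k)-k^2-K_4^2$ and $P(X)=\tilde K_2-2K_3X+2HX^2-X^4$. Then along the solution $$-4\Big(\frac{dx}{dt}\Big)^2=P(x(t))+q(t)\big(x(t)-\overline{x(t)}\big)^2.$$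
   Context: $\times$ denotes the vector product in $\mathbb{R}^3$; the bar denotes complex conjugation. The quantities $H,K_2,K_3,K_4^2$ are integrals of motion of the system (Hamiltonian, the two Casimirs $\|\hat h\|^2+k\|\hat H\|^2$ and $\hat h\cdot\hat H$, and the Kowalewski-type integral). *)

theory Defs
  imports "HOL-Analysis.Analysis" "HOL-Analysis.Cross3"
begin

definition avec :: "real^3" where "avec = vector [1, 0, 0]"

definition Omega :: "real^3 \<Rightarrow> real^3" where
  "Omega Hv = vector [Hv$1 / 2, Hv$2 / 2, Hv$3]"

definition xfun :: "(real \<Rightarrow> real^3) \<Rightarrow> real \<Rightarrow> complex" where
  "xfun Hf t = Complex ((Hf t)$1 / 2) ((Hf t)$2 / 2)"

definition yfun :: "(real \<Rightarrow> real^3) \<Rightarrow> real \<Rightarrow> complex" where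
  "yfun hf t = Complex ((hf t)$1) ((hf t)$2)"

definition qval :: "real \<Rightarrow> complex \<Rightarrow> complex \<Rightarrow> complex" where
  "qval k x y = x^2 - (y - of_real k)"

definition Hint :: "complex \<Rightarrow> real \<Rightarrow> complex \<Rightarrow> real" where
  "Hint x x3 y = Re (x * cnj x) + x3^2 / 2 + Re y"

definition K2 :: "real \<Rightarrow> complex \<Rightarrow> real \<Rightarrow> complex \<Rightarrow> real \<Rightarrow> real" where
  "K2 k x x3 y y3 = (cmod y)^2 + y3^2 + k * (4 * (cmod x)^2 + x3^2)"

definition K3 :: "complex \<Rightarrow> real \<Rightarrow> complex \<Rightarrow> real \<Rightarrow> real" where
  "K3 x x3 y y3 = 2 * Re (x * cnj y) + x3 * y3"

definition K4sq :: "real \<Rightarrow> complex \<Rightarrow> complex \<Rightarrow> real" where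
  "K4sq k x y = (cmod (qval k x y))^2"

definition K2tilde :: "real \<Rightarrow> complex \<Rightarrow> real \<Rightarrow> complex \<Rightarrow> real \<Rightarrow> real" where
  "K2tilde k x x3 y y3 = K2 k x x3 y y3 - k * (2 * Hint x x3 y - 2 * k) - k^2 - K4sq k x y"

definition Ppoly :: "real \<Rightarrow> real \<Rightarrow> real \<Rightarrow> complex \<Rightarrow> complex" where
  "Ppoly Kt K3v Hv X = of_real Kt - 2 * of_real K3v * X + 2 * of_real Hv * X^2 - X^4"

end

theory Submission
  imports Defs
begin

(* The equation for H alone gives dx/dt = i (y3 - x3 x) / 2, so -4 (dx/dt)^2 = (y3 - x3 x)^2.
   The right-hand side of the theorem is a polynomial in the current values of x, y, x3, y3 and k,
   and it equals (y3 - x3 x)^2 identically. *)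

lemma bounded_linear_xcoord: "bounded_linear (\<lambda>v::real^3. Complex (v$1 / 2) (v$2 / 2))"
  by (intro linear_conv_bounded_linear[THEN iffD1] linearI) (simp_all add: complex_eq_iff)

lemma xfun_has_vector_derivative:
  assumes "(Hf has_vector_derivative D) (at s)"
  shows "(xfun Hf has_vector_derivative Complex (D$1 / 2) (D$2 / 2)) (at s)"
  using bounded_linear.has_vector_derivative[OF bounded_linear_xcoord assms]
  by (simp add: xfun_def[abs_def])

lemma xcoord_velocity_eq:
  fixes Hv hv :: "real^3"
  defines "D \<equiv> cross3 Hv (Omega Hv) + cross3 hv avec"
  shows "Complex (D$1 / 2) (D$2 / 2)
         = \<i> / 2 * (of_real (hv$3) - of_real (Hv$3) * Complex (Hv$1 / 2) (Hv$2 / 2))"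
  by (simp add: D_def complex_eq_iff cross3_simps Omega_def avec_def field_simps)

lemma square_y3_minus_x3_x_eq_Ppoly:
  fixes x y :: complex and k x3 y3 :: real
  shows "(of_real y3 - of_real x3 * x)^2
       = Ppoly (K2tilde k x x3 y y3) (K3 x x3 y y3) (Hint x x3 y) x + qval k x y * (x - cnj x)^2"
  unfolding Ppoly_def K2tilde_def K2_def K3_def Hint_def K4sq_def qval_def cmod_power2
  by (simp add: complex_eq_iff eval_nat_numeral field_simps power2_eq_square)

theorem theorem2:
  fixes k :: real and Hf hf :: "real \<Rightarrow> real^3" and I :: "real set" and t :: real
  assumes "k \<in> {0, 1, -1}"
    and "open I"
    and "\<And>s. s \<in> I \<Longrightarrow>
           (Hf has_vector_derivative (cross3 (Hf s) (Omega (Hf s)) + cross3 (hf s) avec)) (at s)"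
    and "\<And>s. s \<in> I \<Longrightarrow>
           (hf has_vector_derivative (cross3 (hf s) (Omega (Hf s)) + k *\<^sub>R cross3 (Hf s) avec)) (at s)"
    and "t \<in> I"
  shows "let x = xfun Hf t; y = yfun hf t; x3 = (Hf t)$3; y3 = (hf t)$3;
             q = qval k x y
         in - 4 * (vector_derivative (xfun Hf) (at t))^2
            = Ppoly (K2tilde k x x3 y y3) (K3 x x3 y y3) (Hint x x3 y) x + q * (x - cnj x)^2"
proof -
  define x where "x = xfun Hf t"
  have "(xfun Hf has_vector_derivative \<i> / 2 * (of_real (hf t $ 3) - of_real (Hf t $ 3) * x)) (at t)"
    using xfun_has_vector_derivative[OF assms(3)[OF assms(5)], unfolded xcoord_velocity_eq]
    by (simp add: x_def xfun_def)
  then have dx: "vector_derivative (xfun Hf) (at t) = \<i> / 2 * (of_real (hf t $ 3) - of_real (Hf t $ 3) * x)"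
    by (rule vector_derivative_at)
  have "- 4 * (vector_derivative (xfun Hf) (at t))^2 = (of_real (hf t $ 3) - of_real (Hf t $ 3) * x)^2"
    unfolding dx by (simp add: power_mult_distrib power_divide)
  then show ?thesis
    unfolding Let_def x_def by (simp add: square_y3_minus_x3_x_eq_Ppoly)
qed

end
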